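(* Let $x\in\mathbb{R}_{\mathrm{alg}}^\times$ and $p\in\mathcal{P}_{KZ}$ with $p\notin\mathbb{R}_{\mathrm{alg}}$. Then $\deg(xp)=\deg(p)$.
   Context: $\mathbb{R}_{\mathrm{alg}}=\mathbb{R}\cap\overline{\mathbb{Q}}$. Semialgebraic subsets of $\mathbb{R}^n$ are finite unions of finite intersections of sets $\{f=0\}$, $\{g>0\}$ with $f,g\in\mathbb{R}_{\mathrm{alg}}[T_1,\dots,T_n]$; $\mathcal{SA}^n$ denotes those with nonempty interior. A period is a real number $\int_X (P/Q)(x)\,dx$ (absolutely convergent) with $X\in\mathcal{SA}^n$, $P,Q\in\mathbb{R}_{\mathrm{alg}}[T_1,\dots,T_n]$, $Q$ not identically zero on $X$; $\mathcal{P}_{KZ}$ is the set of periods (it is an $\mathbb{R}_{\mathrm{alg}}$-algebra). For a nonzero period $p$ there exists a positive integer $k$ and a compact $K\in\mathcal{SA}^k$ with $|p|=\mathrm{vol}_k(K)$; $\deg(p)$ is the smallest such $k$, and $\deg(0)=0$. *)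

theory Defs
  imports "HOL-Analysis.Analysis" "HOL-Computational_Algebra.Polynomial"
begin

definition real_alg :: "real \<Rightarrow> bool" where
  "real_alg x \<longleftrightarrow> algebraic x"

text \<open>Points of R^n are represented as extensional functions on {..<n}
  (the carrier of the product measure below).\<close>
abbreviation Rn :: "nat \<Rightarrow> (nat \<Rightarrow> real) set" where
  "Rn n \<equiv> PiE {..<n} (\<lambda>_. UNIV)"

abbreviation lebn :: "nat \<Rightarrow> (nat \<Rightarrow> real) measure" where
  "lebn n \<equiv> PiM {..<n} (\<lambda>_. lborel)"

inductive_set alg_poly :: "nat \<Rightarrow> ((nat \<Rightarrow> real) \<Rightarrow> real) set" for n :: nat where
  const: "real_alg c \<Longrightarrow> (\<lambda>x. c) \<in> alg_poly n"
| var: "i < n \<Longrightarrow> (\<lambda>x. x i) \<in> alg_poly n"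
| add: "f \<in> alg_poly n \<Longrightarrow> g \<in> alg_poly n \<Longrightarrow> (\<lambda>x. f x + g x) \<in> alg_poly n"
| mult: "f \<in> alg_poly n \<Longrightarrow> g \<in> alg_poly n \<Longrightarrow> (\<lambda>x. f x * g x) \<in> alg_poly n"

inductive_set semialg :: "nat \<Rightarrow> (nat \<Rightarrow> real) set set" for n :: nat where
  zero: "f \<in> alg_poly n \<Longrightarrow> {x \<in> Rn n. f x = 0} \<in> semialg n"
| pos: "g \<in> alg_poly n \<Longrightarrow> {x \<in> Rn n. g x > 0} \<in> semialg n"
| union: "A \<in> semialg n \<Longrightarrow> B \<in> semialg n \<Longrightarrow> A \<union> B \<in> semialg n"
| inter: "A \<in> semialg n \<Longrightarrow> B \<in> semialg n \<Longrightarrow> A \<inter> B \<in> semialg n"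

definition nonempty_interior :: "nat \<Rightarrow> (nat \<Rightarrow> real) set \<Rightarrow> bool" where
  "nonempty_interior n X \<longleftrightarrow>
     (\<exists>a b. (\<forall>i<n. a i < b i) \<and> {y \<in> Rn n. \<forall>i<n. a i < y i \<and> y i < b i} \<subseteq> X)"

definition SA :: "nat \<Rightarrow> (nat \<Rightarrow> real) set set" where
  "SA n = {X \<in> semialg n. nonempty_interior n X}"

definition period :: "real \<Rightarrow> bool" where
  "period p \<longleftrightarrow> (\<exists>n X P Q. 0 < n \<and> X \<in> SA n \<and> P \<in> alg_poly n \<and> Q \<in> alg_poly n \<and>
      (\<exists>y\<in>X. Q y \<noteq> 0) \<and>
      set_integrable (lebn n) X (\<lambda>y. P y / Q y) \<and>
      p = set_lebesgue_integral (lebn n) X (\<lambda>y. P y / Q y))"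

definition period_deg :: "real \<Rightarrow> nat" where
  "period_deg p = (if p = 0 then 0 else
     (LEAST k. 0 < k \<and> (\<exists>K. K \<in> SA k \<and> compact K \<and> \<bar>p\<bar> = measure (lebn k) K)))"

end

theory Submission
  imports Defs
begin

text \<open>Stretching the first coordinate by an algebraic factor \<open>c > 0\<close> is a polynomial change
  of variables with algebraic coefficients and Jacobian \<open>c\<close>: it maps compact sets in \<open>SA\<^sup>k\<close>
  to compact sets in \<open>SA\<^sup>k\<close> and multiplies their volume by \<open>c\<close>. Applied with \<open>c = \<bar>x\<bar>\<close> and
  \<open>c = 1/\<bar>x\<bar>\<close>, this shows that \<open>\<bar>p\<bar>\<close> is a \<open>k\<close>-volume iff \<open>\<bar>x p\<bar>\<close> is, for every \<open>k\<close>, so the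
  two degrees agree.\<close>

lemma real_alg_inverse: "real_alg c \<Longrightarrow> real_alg (1 / c)"
  unfolding real_alg_def by (simp add: algebraic_inverse flip: inverse_eq_divide)

lemma semialg_subset_Rn: "A \<in> semialg k \<Longrightarrow> A \<subseteq> Rn k"
  by (induction rule: semialg.induct) auto

lemma alg_poly_borel_measurable: "f \<in> alg_poly k \<Longrightarrow> f \<in> borel_measurable (lebn k)"
proof (induction rule: alg_poly.induct)
  case (var i)
  then show ?case
    by (simp add: measurable_component_singleton)
next
  case (add f g)
  show ?case
    by (rule borel_measurable_add[OF add.IH])
next
  case (mult f g)
  show ?case
    by (rule borel_measurable_times[OF mult.IH])
qed simp

lemma semialg_sets: "A \<in> semialg k \<Longrightarrow> A \<in> sets (lebn k)"
proof (induction rule: semialg.induct)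
  case (zero f)
  have "{x \<in> Rn k. f x = 0} = f -` {0} \<inter> space (lebn k)"
    by (auto simp: space_PiM)
  then show ?case
    using measurable_sets[OF alg_poly_borel_measurable[OF zero]] by simp
next
  case (pos g)
  have "{x \<in> Rn k. g x > 0} = g -` {0<..} \<inter> space (lebn k)"
    by (auto simp: space_PiM)
  then show ?case
    using measurable_sets[OF alg_poly_borel_measurable[OF pos]] by simp
qed (simp_all add: sets.Un sets.Int)

definition scale_first :: "real \<Rightarrow> (nat \<Rightarrow> real) \<Rightarrow> (nat \<Rightarrow> real)" where
  "scale_first c y = y(0 := c * y 0)"

lemma scale_first_in_Rn_iff: "0 < k \<Longrightarrow> scale_first c y \<in> Rn k \<longleftrightarrow> y \<in> Rn k"
  by (auto simp: scale_first_def PiE_iff extensional_def)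

lemma scale_first_inverse:
  assumes "c \<noteq> 0"
  shows "scale_first (1 / c) (scale_first c y) = y" "scale_first c (scale_first (1 / c) y) = y"
  using assms by (auto simp: scale_first_def)

lemma image_scale_first:
  assumes "K \<subseteq> Rn k" "0 < k" "c \<noteq> 0"
  shows "scale_first c ` K = {y \<in> Rn k. scale_first (1 / c) y \<in> K}"
proof (intro equalityI subsetI)
  fix y assume "y \<in> scale_first c ` K"
  then obtain x where x: "x \<in> K" "y = scale_first c x"
    by blast
  moreover have "x \<in> Rn k"
    using x(1) assms(1) by blast
  ultimately show "y \<in> {y \<in> Rn k. scale_first (1 / c) y \<in> K}"
    using assms(2,3) by (simp add: scale_first_in_Rn_iff scale_first_inverse)
next
  fix y assume "y \<in> {y \<in> Rn k. scale_first (1 / c) y \<in> K}"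
  then show "y \<in> scale_first c ` K"
    by (auto intro: image_eqI[where x = "scale_first (1 / c) y"] simp: scale_first_inverse assms(3))
qed

lemma continuous_on_scale_first: "continuous_on UNIV (scale_first c)"
  unfolding scale_first_def
proof (rule continuous_on_coordinatewise_then_product)
  fix i :: nat
  show "continuous_on UNIV (\<lambda>y :: nat \<Rightarrow> real. (y(0 := c * y 0)) i)"
    by (cases "i = 0") (auto intro: continuous_on_mult_left continuous_on_product_coordinates)
qed

lemma scale_first_measurable:
  assumes "0 < k"
  shows "scale_first c \<in> lebn k \<rightarrow>\<^sub>M lebn k"
  by (rule measurable_PiM_single')
    (use assms in \<open>auto simp: scale_first_def space_PiM PiE_iff extensional_def\<close>)

lemma alg_poly_comp_scale_first:
  assumes "f \<in> alg_poly k" "0 < k" "real_alg c"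
  shows "(\<lambda>y. f (scale_first c y)) \<in> alg_poly k"
  using assms(1)
proof induction
  case (var i)
  have "(\<lambda>y. c * y 0) \<in> alg_poly k"
    using assms(2,3) by (intro alg_poly.mult alg_poly.const alg_poly.var)
  with var show ?case
    by (cases "i = 0") (simp_all add: scale_first_def alg_poly.var)
qed (simp_all add: alg_poly.intros)

lemma semialg_preimage_scale_first:
  assumes "A \<in> semialg k" "0 < k" "real_alg c"
  shows "{y \<in> Rn k. scale_first c y \<in> A} \<in> semialg k"
  using assms(1)
proof induction
  case (zero f)
  have "{y \<in> Rn k. scale_first c y \<in> {x \<in> Rn k. f x = 0}} = {y \<in> Rn k. f (scale_first c y) = 0}"
    using assms(2) by (auto simp: scale_first_in_Rn_iff)
  then show ?case
    using semialg.zero[OF alg_poly_comp_scale_first[OF zero assms(2,3)]] by simp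
next
  case (pos f)
  have "{y \<in> Rn k. scale_first c y \<in> {x \<in> Rn k. f x > 0}} = {y \<in> Rn k. f (scale_first c y) > 0}"
    using assms(2) by (auto simp: scale_first_in_Rn_iff)
  then show ?case
    using semialg.pos[OF alg_poly_comp_scale_first[OF pos assms(2,3)]] by simp
next
  case (union A B)
  have "{y \<in> Rn k. scale_first c y \<in> A \<union> B}
      = {y \<in> Rn k. scale_first c y \<in> A} \<union> {y \<in> Rn k. scale_first c y \<in> B}"
    by blast
  then show ?case
    using semialg.union[OF union.IH] by simp
next
  case (inter A B)
  have "{y \<in> Rn k. scale_first c y \<in> A \<inter> B}
      = {y \<in> Rn k. scale_first c y \<in> A} \<inter> {y \<in> Rn k. scale_first c y \<in> B}"
    by blast
  then show ?case
    using semialg.inter[OF inter.IH] by simp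
qed

lemma nonempty_interior_preimage_scale_first:
  assumes "nonempty_interior k A" "0 < k" "c > 0"
  shows "nonempty_interior k {y \<in> Rn k. scale_first (1 / c) y \<in> A}"
proof -
  obtain a b where ab: "\<forall>i<k. a i < b i" "{y \<in> Rn k. \<forall>i<k. a i < y i \<and> y i < b i} \<subseteq> A"
    using assms(1) unfolding nonempty_interior_def by blast
  have "scale_first (1 / c) y \<in> A"
    if y: "y \<in> Rn k" "\<forall>i<k. scale_first c a i < y i \<and> y i < scale_first c b i" for y
  proof -
    have "\<forall>i<k. a i < scale_first (1 / c) y i \<and> scale_first (1 / c) y i < b i"
      using y(2) assms(3) by (auto simp: scale_first_def field_simps)
    moreover have "scale_first (1 / c) y \<in> Rn k"
      using y(1) assms(2) by (simp add: scale_first_in_Rn_iff)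
    ultimately show ?thesis
      using ab(2) by blast
  qed
  moreover have "\<forall>i<k. scale_first c a i < scale_first c b i"
    using ab(1) assms(3) by (simp add: scale_first_def)
  ultimately show ?thesis
    unfolding nonempty_interior_def by blast
qed

text \<open>Fubini: integrate over the first coordinate innermost, where the stretch is the
  one-dimensional affine substitution.\<close>

lemma emeasure_preimage_scale_first:
  assumes A: "A \<in> sets (lebn k)" and k: "0 < k" and c: "c \<noteq> 0"
  shows "emeasure (lebn k) {y \<in> Rn k. scale_first (1 / c) y \<in> A} = ennreal \<bar>c\<bar> * emeasure (lebn k) A"
proof -
  interpret product_sigma_finite "\<lambda>_ :: nat. lborel :: real measure"
    by standard
  define A' where "A' = {y \<in> Rn k. scale_first (1 / c) y \<in> A}"
  have "A' = scale_first (1 / c) -` A \<inter> space (lebn k)"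
    by (auto simp: A'_def space_PiM)
  then have A': "A' \<in> sets (lebn k)"
    using measurable_sets[OF scale_first_measurable[OF k] A] by simp
  define I where "I = {1..<k}"
  have I: "{..<k} = insert 0 I" "0 \<notin> I" "finite I"
    using k by (auto simp: I_def)
  have inner: "(\<integral>\<^sup>+t. indicator A' (x(0 := t)) \<partial>lborel)
      = (\<integral>\<^sup>+t. ennreal \<bar>c\<bar> * indicator A (x(0 := t)) \<partial>lborel)"
    if x: "x \<in> space (PiM I (\<lambda>_. lborel))" for x
  proof -
    have line: "(\<lambda>t. x(0 := f t)) \<in> borel \<rightarrow>\<^sub>M lebn k" if "f \<in> borel_measurable borel" for f
      by (rule measurable_fun_upd[where J = I]) (use x I that in auto)
    have "indicator A' (x(0 := t)) = (indicator A (x(0 := t / c)) :: ennreal)" for t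
      using x I by (auto simp: A'_def scale_first_def indicator_def space_PiM PiE_iff extensional_def)
    then have "(\<integral>\<^sup>+t. indicator A' (x(0 := t)) \<partial>lborel) = (\<integral>\<^sup>+t. indicator A (x(0 := t / c)) \<partial>lborel)"
      by simp
    also have "\<dots> = ennreal \<bar>c\<bar> * (\<integral>\<^sup>+t. indicator A (x(0 := (0 + c * t) / c)) \<partial>lborel)"
      by (rule nn_integral_real_affine[OF _ c]) (use A line in measurable)
    also have "\<dots> = (\<integral>\<^sup>+t. ennreal \<bar>c\<bar> * indicator A (x(0 := t)) \<partial>lborel)"
      using c A line[of "\<lambda>t. t"] by (simp add: nn_integral_cmult)
    finally show ?thesis .
  qed
  have "emeasure (lebn k) A' = (\<integral>\<^sup>+x. (\<integral>\<^sup>+t. indicator A' (x(0 := t)) \<partial>lborel) \<partial>PiM I (\<lambda>_. lborel))"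
    using A' I by (simp flip: product_nn_integral_insert)
  also have "\<dots> = (\<integral>\<^sup>+x. (\<integral>\<^sup>+t. ennreal \<bar>c\<bar> * indicator A (x(0 := t)) \<partial>lborel) \<partial>PiM I (\<lambda>_. lborel))"
    by (rule nn_integral_cong) (rule inner)
  also have "\<dots> = (\<integral>\<^sup>+y. ennreal \<bar>c\<bar> * indicator A y \<partial>lebn k)"
    using A I by (simp add: product_nn_integral_insert)
  also have "\<dots> = ennreal \<bar>c\<bar> * emeasure (lebn k) A"
    using A by (rule nn_integral_cmult_indicator)
  finally show ?thesis
    unfolding A'_def .
qed

definition SA_volume :: "nat \<Rightarrow> real \<Rightarrow> bool" where
  "SA_volume k r \<longleftrightarrow> (\<exists>K. K \<in> SA k \<and> compact K \<and> r = measure (lebn k) K)"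

lemma SA_volume_mult:
  assumes "SA_volume k r" "0 < k" "c > 0" "real_alg c"
  shows "SA_volume k (c * r)"
proof -
  obtain K where K: "K \<in> SA k" "compact K" "r = measure (lebn k) K"
    using assms(1) unfolding SA_volume_def by blast
  have K_semialg: "K \<in> semialg k" and K_interior: "nonempty_interior k K"
    using K(1) by (auto simp: SA_def)
  define K' where "K' = {y \<in> Rn k. scale_first (1 / c) y \<in> K}"
  have "K' \<in> SA k"
    using semialg_preimage_scale_first[OF K_semialg assms(2) real_alg_inverse[OF assms(4)]]
      nonempty_interior_preimage_scale_first[OF K_interior assms(2,3)]
    by (simp add: SA_def K'_def)
  moreover have "compact K'"
  proof -
    have "K' = scale_first c ` K"
      using image_scale_first[OF semialg_subset_Rn[OF K_semialg] assms(2), of c] assms(3)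
      by (simp add: K'_def)
    then show ?thesis
      using compact_continuous_image[OF continuous_on_subset[OF continuous_on_scale_first] K(2)]
      by simp
  qed
  moreover have "c * r = measure (lebn k) K'"
    using emeasure_preimage_scale_first[OF semialg_sets[OF K_semialg] assms(2), of c] assms(3) K(3)
    by (simp add: K'_def measure_def enn2real_mult)
  ultimately show ?thesis
    unfolding SA_volume_def by blast
qed

lemma SA_volume_mult_iff:
  assumes "0 < k" "c > 0" "real_alg c"
  shows "SA_volume k (c * r) \<longleftrightarrow> SA_volume k r"
proof
  assume "SA_volume k (c * r)"
  then have "SA_volume k (1 / c * (c * r))"
    by (rule SA_volume_mult) (use assms real_alg_inverse in auto)
  then show "SA_volume k r"
    using assms(2) by simp
qed (rule SA_volume_mult[OF _ assms])

theorem mainTheorem7: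
  fixes x p :: real
  assumes "real_alg x" and "x \<noteq> 0"
    and "period p" and "\<not> real_alg p"
  shows "period_deg (x * p) = period_deg p"
proof -
  have "p \<noteq> 0"
    using assms(4) by (auto simp: real_alg_def)
  have "real_alg \<bar>x\<bar>" "\<bar>x\<bar> > 0"
    using assms(1,2) by (auto simp: real_alg_def)
  then have "(\<lambda>k. 0 < k \<and> SA_volume k \<bar>x * p\<bar>) = (\<lambda>k. 0 < k \<and> SA_volume k \<bar>p\<bar>)"
    using SA_volume_mult_iff by (auto simp: abs_mult)
  then show ?thesis
    using \<open>p \<noteq> 0\<close> assms(2) unfolding period_deg_def SA_volume_def[symmetric] by simp
qed

end
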